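(* Let $A$ be a finite skew brace such that $\Lambda(A)$ has exactly one vertex. Then $(A/\ker\lambda,\circ)$ and $(\operatorname{Fix}(A),+)$ are isomorphic abelian groups. Moreover $x+f-x=-f$ for all $f\in\operatorname{Fix}(A)$ and all $x\in A\setminus\operatorname{Fix}(A)$.
   Context: A skew brace is a triple $(A,+,\circ)$ where $(A,+)$ and $(A,\circ)$ are groups with $a\circ(b+c)=a\circ b-a+a\circ c$. $\lambda\colon(A,\circ)\to\operatorname{Aut}(A,+)$, $\lambda_a(b)=-a+a\circ b$, is a group homomorphism; $\ker\lambda$ is its kernel. $\operatorname{Fix}(A)=\{a\in A:\lambda_x(a)=a\ \forall x\in A\}$. $\Lambda(A)$ is the graph whose vertices are the $\lambda$-orbits of size $>1$, two distinct vertices $L_1,L_2$ adjacent iff $\gcd(|L_1|,|L_2|)\ne1$. *)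

theory Defs
  imports "HOL-Algebra.Algebra"
begin

(* A skew brace is given by two group structures on the same carrier:
  G = (A,+) (written multiplicatively in HOL-Algebra, so a + b is a \<otimes>_G b and -a is inv_G a)
  and C = (A,\<circ>) (a \<circ> b is a \<otimes>_C b). *)

definition skew_brace :: "'a monoid \<Rightarrow> 'a monoid \<Rightarrow> bool" where
  "skew_brace G C \<longleftrightarrow> group G \<and> group C \<and> carrier C = carrier G \<and>
     (\<forall>a\<in>carrier G. \<forall>b\<in>carrier G. \<forall>c\<in>carrier G.
        a \<otimes>\<^bsub>C\<^esub> (b \<otimes>\<^bsub>G\<^esub> c)
          = ((a \<otimes>\<^bsub>C\<^esub> b) \<otimes>\<^bsub>G\<^esub> inv\<^bsub>G\<^esub> a) \<otimes>\<^bsub>G\<^esub> (a \<otimes>\<^bsub>C\<^esub> c))"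

definition brace_lambda :: "'a monoid \<Rightarrow> 'a monoid \<Rightarrow> 'a \<Rightarrow> 'a \<Rightarrow> 'a" where
  "brace_lambda G C a b = inv\<^bsub>G\<^esub> a \<otimes>\<^bsub>G\<^esub> (a \<otimes>\<^bsub>C\<^esub> b)"

definition brace_ker :: "'a monoid \<Rightarrow> 'a monoid \<Rightarrow> 'a set" where
  "brace_ker G C = {a \<in> carrier C. \<forall>b\<in>carrier G. brace_lambda G C a b = b}"

definition brace_Fix :: "'a monoid \<Rightarrow> 'a monoid \<Rightarrow> 'a set" where
  "brace_Fix G C = {a \<in> carrier G. \<forall>x\<in>carrier G. brace_lambda G C x a = a}"

definition lambda_orbit :: "'a monoid \<Rightarrow> 'a monoid \<Rightarrow> 'a \<Rightarrow> 'a set" where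
  "lambda_orbit G C a = (\<lambda>x. brace_lambda G C x a) ` carrier G"

definition Lambda_vertices :: "'a monoid \<Rightarrow> 'a monoid \<Rightarrow> 'a set set" where
  "Lambda_vertices G C = {lambda_orbit G C a | a. a \<in> carrier G \<and> card (lambda_orbit G C a) > 1}"

definition Lambda_adj :: "'a monoid \<Rightarrow> 'a monoid \<Rightarrow> 'a set \<Rightarrow> 'a set \<Rightarrow> bool" where
  "Lambda_adj G C L1 L2 \<longleftrightarrow> L1 \<in> Lambda_vertices G C \<and> L2 \<in> Lambda_vertices G C \<and>
     L1 \<noteq> L2 \<and> gcd (card L1) (card L2) \<noteq> 1"

end

theory Submission
  imports Defs
begin

(* If \<Lambda>(A) has a single vertex, the non-fixed elements form one \<lambda>-orbit L = A \ Fix(A).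
  Both |L| and |Fix(A)| divide |A| = |L| + |Fix(A)|, so |L| = |Fix(A)| and L is a single coset
  l + Fix(A). Hence l + l \<in> Fix(A); choosing x with \<lambda>_x(l) = l + f and applying \<lambda>_x to l + l
  gives l + f - l = -f. So inversion is an endomorphism of Fix(A), which is therefore abelian,
  and x \<mapsto> -l + \<lambda>_x(l) is a surjective homomorphism (A,\<circ>) \<rightarrow> (Fix(A),+) with kernel ker \<lambda>. *)

locale skew_brace_struct = group G + C: group C
  for G :: "'a monoid" (structure) and C :: "'a monoid" +
  assumes carrier_C: "carrier C = carrier G"
    and brace_distrib: "\<And>a b c. \<lbrakk>a \<in> carrier G; b \<in> carrier G; c \<in> carrier G\<rbrakk> \<Longrightarrow>
      a \<otimes>\<^bsub>C\<^esub> (b \<otimes> c) = ((a \<otimes>\<^bsub>C\<^esub> b) \<otimes> inv a) \<otimes> (a \<otimes>\<^bsub>C\<^esub> c)"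

lemma skew_brace_iff_struct: "skew_brace G C \<longleftrightarrow> skew_brace_struct G C"
  unfolding skew_brace_def skew_brace_struct_def skew_brace_struct_axioms_def by auto

context skew_brace_struct
begin

abbreviation lam :: "'a \<Rightarrow> 'a \<Rightarrow> 'a" where "lam \<equiv> brace_lambda G C"
abbreviation Fix :: "'a set" where "Fix \<equiv> brace_Fix G C"

lemma C_m_closed [simp]: "\<lbrakk>a \<in> carrier G; b \<in> carrier G\<rbrakk> \<Longrightarrow> a \<otimes>\<^bsub>C\<^esub> b \<in> carrier G"
  using C.m_closed carrier_C by auto

lemma C_inv_closed [simp]: "a \<in> carrier G \<Longrightarrow> inv\<^bsub>C\<^esub> a \<in> carrier G"
  using C.inv_closed carrier_C by auto

lemma C_one_eq: "\<one>\<^bsub>C\<^esub> = \<one>"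
proof -
  have one_C: "\<one>\<^bsub>C\<^esub> \<in> carrier G" using carrier_C by auto
  have "\<one>\<^bsub>C\<^esub> \<otimes>\<^bsub>C\<^esub> (\<one> \<otimes> \<one>) = ((\<one>\<^bsub>C\<^esub> \<otimes>\<^bsub>C\<^esub> \<one>) \<otimes> inv \<one>\<^bsub>C\<^esub>) \<otimes> (\<one>\<^bsub>C\<^esub> \<otimes>\<^bsub>C\<^esub> \<one>)"
    using brace_distrib[OF one_C one_closed one_closed] by simp
  then have "\<one> = inv \<one>\<^bsub>C\<^esub>" using one_C carrier_C by simp
  then show ?thesis using one_C by (metis inv_inv inv_one)
qed

lemma lambda_closed [simp]: "\<lbrakk>a \<in> carrier G; b \<in> carrier G\<rbrakk> \<Longrightarrow> lam a b \<in> carrier G"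
  by (simp add: brace_lambda_def)

lemma lambda_mult:
  "\<lbrakk>a \<in> carrier G; b \<in> carrier G; c \<in> carrier G\<rbrakk> \<Longrightarrow> lam a (b \<otimes> c) = lam a b \<otimes> lam a c"
  unfolding brace_lambda_def using brace_distrib by (simp add: m_assoc)

lemma lambda_one [simp]: "a \<in> carrier G \<Longrightarrow> lam a \<one> = \<one>"
  unfolding brace_lambda_def using carrier_C C_one_eq by (metis C.r_one l_inv)

lemma lambda_inv: "\<lbrakk>a \<in> carrier G; b \<in> carrier G\<rbrakk> \<Longrightarrow> lam a (inv b) = inv (lam a b)"
  by (metis inv_closed inv_equality lambda_closed lambda_mult lambda_one r_inv)

lemma lambda_C_mult:
  assumes a: "a \<in> carrier G" and b: "b \<in> carrier G" and c: "c \<in> carrier G"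
  shows "lam (a \<otimes>\<^bsub>C\<^esub> b) c = lam a (lam b c)"
proof -
  have "lam a (lam b c) = lam a (inv b \<otimes> (b \<otimes>\<^bsub>C\<^esub> c))" by (simp add: brace_lambda_def)
  also have "\<dots> = inv (lam a b) \<otimes> lam a (b \<otimes>\<^bsub>C\<^esub> c)"
    using a b c by (simp add: lambda_mult lambda_inv)
  also have "\<dots> = inv (inv a \<otimes> (a \<otimes>\<^bsub>C\<^esub> b)) \<otimes> (inv a \<otimes> (a \<otimes>\<^bsub>C\<^esub> (b \<otimes>\<^bsub>C\<^esub> c)))"
    by (simp add: brace_lambda_def)
  also have "\<dots> = inv (a \<otimes>\<^bsub>C\<^esub> b) \<otimes> ((a \<otimes>\<^bsub>C\<^esub> b) \<otimes>\<^bsub>C\<^esub> c)"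
    using a b c carrier_C by (simp add: inv_mult_group m_assoc C.m_assoc del: r_inv l_inv)
      (metis C_m_closed inv_closed l_one m_assoc r_inv)
  finally show ?thesis by (simp add: brace_lambda_def)
qed

lemma lambda_C_one [simp]: "b \<in> carrier G \<Longrightarrow> lam \<one>\<^bsub>C\<^esub> b = b"
  unfolding brace_lambda_def using carrier_C C_one_eq by (metis C.l_one l_one inv_one)

lemma lambda_C_inv_left [simp]:
  "\<lbrakk>a \<in> carrier G; b \<in> carrier G\<rbrakk> \<Longrightarrow> lam (inv\<^bsub>C\<^esub> a) (lam a b) = b"
  using lambda_C_mult[of "inv\<^bsub>C\<^esub> a" a b] carrier_C by simp

lemma lambda_C_inv_right [simp]:
  "\<lbrakk>a \<in> carrier G; b \<in> carrier G\<rbrakk> \<Longrightarrow> lam a (lam (inv\<^bsub>C\<^esub> a) b) = b"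
  using lambda_C_mult[of a "inv\<^bsub>C\<^esub> a" b] carrier_C by simp

lemma Fix_lambda: "\<lbrakk>f \<in> Fix; x \<in> carrier G\<rbrakk> \<Longrightarrow> lam x f = f"
  unfolding brace_Fix_def by auto

lemma Fix_subset: "Fix \<subseteq> carrier G"
  unfolding brace_Fix_def by auto

lemma subgroup_Fix: "subgroup Fix G"
proof
  show "Fix \<subseteq> carrier G" by (rule Fix_subset)
  show "\<one> \<in> Fix" unfolding brace_Fix_def by auto
next
  fix a b assume "a \<in> Fix" "b \<in> Fix"
  then show "a \<otimes> b \<in> Fix"
    unfolding brace_Fix_def by (auto simp: lambda_mult)
next
  fix a assume "a \<in> Fix"
  then show "inv a \<in> Fix"
    unfolding brace_Fix_def by (auto simp: lambda_inv)
qed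

lemma lambda_mult_Fix: "\<lbrakk>x \<in> carrier G; a \<in> carrier G; f \<in> Fix\<rbrakk> \<Longrightarrow> lam x (a \<otimes> f) = lam x a \<otimes> f"
  using Fix_subset by (auto simp: lambda_mult Fix_lambda)

lemma mult_Fix_notin_Fix:
  assumes a: "a \<in> carrier G - Fix" and f: "f \<in> Fix"
  shows "a \<otimes> f \<in> carrier G - Fix"
proof -
  have fG: "f \<in> carrier G" using f Fix_subset by auto
  have "a \<otimes> f \<notin> Fix"
  proof
    assume "a \<otimes> f \<in> Fix"
    then have "(a \<otimes> f) \<otimes> inv f \<in> Fix"
      using f subgroup.m_closed[OF subgroup_Fix] subgroup.m_inv_closed[OF subgroup_Fix] by blast
    then show False using a fG by (simp add: m_assoc)
  qed
  then show ?thesis using a fG by simp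
qed

lemma lambda_notin_Fix: "\<lbrakk>a \<in> carrier G - Fix; x \<in> carrier G\<rbrakk> \<Longrightarrow> lam x a \<in> carrier G - Fix"
  using Fix_lambda[of "lam x a" "inv\<^bsub>C\<^esub> x"] by auto

definition lambda_perm :: "'a \<Rightarrow> 'a \<Rightarrow> 'a" where
  "lambda_perm x = restrict (lam x) (carrier G)"

lemma lambda_perm_Bij: "x \<in> carrier G \<Longrightarrow> lambda_perm x \<in> Bij (carrier G)"
proof -
  assume x: "x \<in> carrier G"
  have "bij_betw (lam x) (carrier G) (carrier G)"
    by (rule bij_betwI[where g = "lam (inv\<^bsub>C\<^esub> x)"]) (use x in auto)
  then show ?thesis
    unfolding lambda_perm_def Bij_def by (simp add: bij_betw_restrict_eq)
qed

lemma group_action_lambda: "group_action C (carrier G) lambda_perm"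
  unfolding group_action_def group_hom_def group_hom_axioms_def
proof (intro conjI)
  show "group C" by (rule C.group_axioms)
  show "group (BijGroup (carrier G))" by (rule group_BijGroup)
  show "lambda_perm \<in> hom C (BijGroup (carrier G))"
  proof (rule homI)
    fix x assume "x \<in> carrier C"
    then show "lambda_perm x \<in> carrier (BijGroup (carrier G))"
      using lambda_perm_Bij carrier_C by (simp add: BijGroup_def)
  next
    fix x y assume "x \<in> carrier C" "y \<in> carrier C"
    then have x: "x \<in> carrier G" and y: "y \<in> carrier G" using carrier_C by auto
    have "lambda_perm (x \<otimes>\<^bsub>C\<^esub> y) = compose (carrier G) (lambda_perm x) (lambda_perm y)"
      unfolding lambda_perm_def compose_def using x y by (auto simp: lambda_C_mult)
    then show "lambda_perm (x \<otimes>\<^bsub>C\<^esub> y) = lambda_perm x \<otimes>\<^bsub>BijGroup (carrier G)\<^esub> lambda_perm y"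
      using lambda_perm_Bij[OF x] lambda_perm_Bij[OF y] by (simp add: BijGroup_def)
  qed
qed

lemma card_lambda_orbit_dvd: "a \<in> carrier G \<Longrightarrow> card (lambda_orbit G C a) dvd card (carrier G)"
proof -
  assume a: "a \<in> carrier G"
  have "orbit C lambda_perm a = lambda_orbit G C a"
    unfolding orbit_def lambda_orbit_def lambda_perm_def using a carrier_C by auto
  then show ?thesis
    using group_action.orbit_stabilizer_theorem[OF group_action_lambda a] carrier_C
    unfolding order_def by (metis dvd_triv_left)
qed

lemma self_in_lambda_orbit: "a \<in> carrier G \<Longrightarrow> a \<in> lambda_orbit G C a"
  unfolding lambda_orbit_def using C_one_eq lambda_C_one by (metis image_eqI one_closed)

lemma lambda_orbit_Fix: "a \<in> Fix \<Longrightarrow> lambda_orbit G C a = {a}"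
  unfolding lambda_orbit_def using Fix_lambda by auto

lemma lambda_orbit_subset_nonfixed: "a \<in> carrier G - Fix \<Longrightarrow> lambda_orbit G C a \<subseteq> carrier G - Fix"
  unfolding lambda_orbit_def using lambda_notin_Fix by auto

lemma card_lambda_orbit_gt_1:
  assumes fin: "finite (carrier G)" and a: "a \<in> carrier G - Fix"
  shows "card (lambda_orbit G C a) > 1"
proof -
  obtain x where x: "x \<in> carrier G" "lam x a \<noteq> a" using a unfolding brace_Fix_def by auto
  have "{a, lam x a} \<subseteq> lambda_orbit G C a"
    using self_in_lambda_orbit a x unfolding lambda_orbit_def by auto
  moreover have "finite (lambda_orbit G C a)" using fin unfolding lambda_orbit_def by simp
  ultimately have "card {a, lam x a} \<le> card (lambda_orbit G C a)" by (rule card_mono[rotated])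
  then show ?thesis using x by simp
qed

lemma single_vertex_imp_transitive:
  assumes fin: "finite (carrier G)" and one: "card (Lambda_vertices G C) = 1"
    and a: "a \<in> carrier G - Fix"
  shows "lambda_orbit G C a = carrier G - Fix"
proof -
  obtain L where L: "Lambda_vertices G C = {L}" using one by (rule card_1_singletonE)
  have orbit_eq_L: "lambda_orbit G C b = L" if "b \<in> carrier G - Fix" for b
    using that card_lambda_orbit_gt_1[OF fin that] L unfolding Lambda_vertices_def by blast
  obtain l where l: "l \<in> carrier G" "L = lambda_orbit G C l" "card (lambda_orbit G C l) > 1"
    using L unfolding Lambda_vertices_def by blast
  have "l \<notin> Fix" using l lambda_orbit_Fix by fastforce
  then have "L \<subseteq> carrier G - Fix" using l lambda_orbit_subset_nonfixed by blast
  moreover have "carrier G - Fix \<subseteq> L" using orbit_eq_L self_in_lambda_orbit by blast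
  ultimately show ?thesis using orbit_eq_L[OF a] by blast
qed

lemma single_vertex_imp_nonfixed_ne:
  assumes "card (Lambda_vertices G C) = 1"
  shows "carrier G - Fix \<noteq> {}"
proof -
  obtain L where "L \<in> Lambda_vertices G C" using assms by (metis card_1_singletonE singletonI)
  then obtain l where "l \<in> carrier G" "card (lambda_orbit G C l) > 1"
    unfolding Lambda_vertices_def by blast
  then show ?thesis using lambda_orbit_Fix by fastforce
qed

end

locale transitive_on_nonfixed = skew_brace_struct +
  assumes finite_carrier: "finite (carrier G)"
    and nonfixed_ne: "carrier G - brace_Fix G C \<noteq> {}"
    and orbit_nonfixed: "a \<in> carrier G - brace_Fix G C \<Longrightarrow> lambda_orbit G C a = carrier G - brace_Fix G C"
begin

lemma card_nonfixed_eq_card_Fix: "card (carrier G - Fix) = card Fix"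
proof -
  have fin_Fix: "finite Fix" using finite_carrier Fix_subset by (rule finite_subset[rotated])
  have sum: "card Fix + card (carrier G - Fix) = card (carrier G)"
    using card_Diff_subset[OF fin_Fix Fix_subset] card_mono[OF finite_carrier Fix_subset] by simp
  obtain a where a: "a \<in> carrier G - Fix" using nonfixed_ne by blast
  have "card (carrier G - Fix) dvd card (carrier G)"
    using card_lambda_orbit_dvd[of a] orbit_nonfixed[OF a] a by simp
  then have "card (carrier G - Fix) dvd card Fix" using sum by (metis dvd_add_left_iff dvd_refl)
  moreover have "card Fix dvd card (carrier G)"
    using lagrange[OF subgroup_Fix] unfolding order_def by (metis dvd_triv_right)
  then have "card Fix dvd card (carrier G - Fix)" using sum by (metis dvd_add_right_iff dvd_refl)
  ultimately show ?thesis by (rule dvd_antisym)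
qed

lemma nonfixed_eq_l_coset:
  assumes l: "l \<in> carrier G - Fix"
  shows "carrier G - Fix = l <# Fix"
proof (rule card_subset_eq[symmetric])
  show "finite (carrier G - Fix)" using finite_carrier by simp
  show sub: "l <# Fix \<subseteq> carrier G - Fix"
    unfolding l_coset_def using mult_Fix_notin_Fix[OF l] by auto
  have "inj_on ((\<otimes>) l) Fix" using l Fix_subset by (intro inj_onI) (auto intro: l_cancel)
  moreover have "l <# Fix = (\<otimes>) l ` Fix" unfolding l_coset_def by auto
  ultimately show "card (l <# Fix) = card (carrier G - Fix)"
    using card_image card_nonfixed_eq_card_Fix by simp
qed

lemma inv_mult_nonfixed_in_Fix:
  assumes x: "x \<in> carrier G - Fix" and y: "y \<in> carrier G - Fix"
  shows "inv x \<otimes> y \<in> Fix"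
proof -
  obtain f where f: "f \<in> Fix" "y = x \<otimes> f"
    using y nonfixed_eq_l_coset[OF x] unfolding l_coset_def by auto
  then show ?thesis using x Fix_subset by (auto simp: m_assoc[symmetric])
qed

lemma square_nonfixed_in_Fix:
  assumes x: "x \<in> carrier G - Fix"
  shows "x \<otimes> x \<in> Fix"
proof (rule ccontr)
  assume "x \<otimes> x \<notin> Fix"
  then have "inv x \<otimes> (x \<otimes> x) \<in> Fix" using x inv_mult_nonfixed_in_Fix by simp
  then show False using x by (simp add: m_assoc[symmetric])
qed

lemma conj_Fix_eq_inv:
  assumes f: "f \<in> Fix" and x: "x \<in> carrier G - Fix"
  shows "(x \<otimes> f) \<otimes> inv x = inv f"
proof -
  have xG: "x \<in> carrier G" and fG: "f \<in> carrier G" using x f Fix_subset by auto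
  have "x \<otimes> f \<in> lambda_orbit G C x" using orbit_nonfixed[OF x] mult_Fix_notin_Fix[OF x f] by simp
  then obtain y where y: "y \<in> carrier G" "lam y x = x \<otimes> f" unfolding lambda_orbit_def by auto
  have "x \<otimes> x = lam y (x \<otimes> x)" using Fix_lambda[OF square_nonfixed_in_Fix[OF x] y(1)] by simp
  also have "\<dots> = (x \<otimes> f) \<otimes> (x \<otimes> f)" using lambda_mult[OF y(1) xG xG] y(2) by simp
  finally have "x \<otimes> x = x \<otimes> (f \<otimes> x \<otimes> f)" using xG fG by (simp add: m_assoc)
  then have "x = f \<otimes> x \<otimes> f" using xG fG by simp
  then have "inv f \<otimes> x = inv f \<otimes> (f \<otimes> x \<otimes> f)" by simp
  also have "\<dots> = x \<otimes> f" using xG fG by (simp add: m_assoc[symmetric])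
  finally show ?thesis using inv_solve_right'[of "inv f" "x \<otimes> f" x] xG fG by simp
qed

lemma inv_mult_Fix: "\<lbrakk>u \<in> Fix; v \<in> Fix\<rbrakk> \<Longrightarrow> inv (u \<otimes> v) = inv u \<otimes> inv v"
proof -
  assume u: "u \<in> Fix" and v: "v \<in> Fix"
  obtain l where l: "l \<in> carrier G - Fix" using nonfixed_ne by blast
  have lG: "l \<in> carrier G" and uG: "u \<in> carrier G" and vG: "v \<in> carrier G"
    using l u v Fix_subset by auto
  have "inv (u \<otimes> v) = (l \<otimes> (u \<otimes> v)) \<otimes> inv l"
    using conj_Fix_eq_inv[OF subgroup.m_closed[OF subgroup_Fix u v] l] by simp
  also have "\<dots> = ((l \<otimes> u) \<otimes> inv l) \<otimes> ((l \<otimes> v) \<otimes> inv l)"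
  proof -
    have "inv l \<otimes> (l \<otimes> z) = z" if "z \<in> carrier G" for z
      using lG that by (simp add: m_assoc[symmetric])
    then show ?thesis using lG uG vG by (simp add: m_assoc)
  qed
  also have "\<dots> = inv u \<otimes> inv v" using conj_Fix_eq_inv[OF u l] conj_Fix_eq_inv[OF v l] by simp
  finally show ?thesis .
qed

lemma comm_group_Fix: "comm_group (G\<lparr>carrier := Fix\<rparr>)"
proof -
  have "a \<otimes> b = b \<otimes> a" if a: "a \<in> Fix" and b: "b \<in> Fix" for a b
  proof -
    have "a \<in> carrier G" "b \<in> carrier G" using a b Fix_subset by auto
    then show ?thesis
      using inv_mult_Fix[OF subgroup.m_inv_closed[OF subgroup_Fix a]
                            subgroup.m_inv_closed[OF subgroup_Fix b]]
      by (simp add: inv_mult_group)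
  qed
  then show ?thesis
    using group.group_comm_groupI[OF subgroup.subgroup_is_group[OF subgroup_Fix is_group]] by simp
qed

definition lambda_shift :: "'a \<Rightarrow> 'a \<Rightarrow> 'a" where
  "lambda_shift l x = inv l \<otimes> lam x l"

context
  fixes l assumes l: "l \<in> carrier G - Fix"
begin

lemma lambda_shift_in_Fix: "x \<in> carrier G \<Longrightarrow> lambda_shift l x \<in> Fix"
  unfolding lambda_shift_def using l lambda_notin_Fix inv_mult_nonfixed_in_Fix by simp

lemma lambda_eq_mult_shift: "x \<in> carrier G \<Longrightarrow> lam x l = l \<otimes> lambda_shift l x"
  unfolding lambda_shift_def using l by (simp add: m_assoc[symmetric])

lemma lambda_shift_C_mult:
  assumes x: "x \<in> carrier G" and y: "y \<in> carrier G"
  shows "lambda_shift l (x \<otimes>\<^bsub>C\<^esub> y) = lambda_shift l x \<otimes> lambda_shift l y"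
proof -
  have "lam (x \<otimes>\<^bsub>C\<^esub> y) l = lam x (l \<otimes> lambda_shift l y)"
    using lambda_C_mult x y l lambda_eq_mult_shift[OF y] by simp
  also have "\<dots> = lam x l \<otimes> lambda_shift l y"
    using lambda_mult_Fix[OF x _ lambda_shift_in_Fix[OF y]] l by simp
  finally show ?thesis
    unfolding lambda_shift_def[of l "x \<otimes>\<^bsub>C\<^esub> y"]
    using x y l lambda_shift_in_Fix[OF y] Fix_subset
    by (auto simp: m_assoc lambda_shift_def)
qed

lemma group_hom_lambda_shift: "group_hom C (G\<lparr>carrier := Fix\<rparr>) (lambda_shift l)"
  unfolding group_hom_def group_hom_axioms_def
proof (intro conjI)
  show "group C" by (rule C.group_axioms)
  show "group (G\<lparr>carrier := Fix\<rparr>)" by (rule subgroup.subgroup_is_group[OF subgroup_Fix is_group])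
  show "lambda_shift l \<in> hom C (G\<lparr>carrier := Fix\<rparr>)"
    by (rule homI) (use carrier_C lambda_shift_in_Fix lambda_shift_C_mult in simp_all)
qed

lemma lambda_shift_surj: "lambda_shift l ` carrier C = Fix"
proof
  show "lambda_shift l ` carrier C \<subseteq> Fix" using lambda_shift_in_Fix carrier_C by auto
  show "Fix \<subseteq> lambda_shift l ` carrier C"
  proof
    fix f assume f: "f \<in> Fix"
    have "l \<otimes> f \<in> lambda_orbit G C l" using orbit_nonfixed[OF l] mult_Fix_notin_Fix[OF l f] by simp
    then obtain x where x: "x \<in> carrier G" "lam x l = l \<otimes> f" unfolding lambda_orbit_def by auto
    then have "lambda_shift l x = f"
      unfolding lambda_shift_def using l f Fix_subset by (auto simp: m_assoc[symmetric])
    then show "f \<in> lambda_shift l ` carrier C" using x carrier_C by force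
  qed
qed

lemma kernel_lambda_shift: "kernel C (G\<lparr>carrier := Fix\<rparr>) (lambda_shift l) = brace_ker G C"
proof -
  have "(\<forall>b\<in>carrier G. lam x b = b) \<longleftrightarrow> lam x l = l" if x: "x \<in> carrier G" for x
  proof
    assume xl: "lam x l = l"
    show "\<forall>b\<in>carrier G. lam x b = b"
    proof
      fix b assume b: "b \<in> carrier G"
      show "lam x b = b"
      proof (cases "b \<in> Fix")
        case True then show ?thesis using Fix_lambda x by simp
      next
        case False
        then have f: "inv l \<otimes> b \<in> Fix" using b l inv_mult_nonfixed_in_Fix by simp
        have b_eq: "b = l \<otimes> (inv l \<otimes> b)" using b l by (simp add: m_assoc[symmetric])
        then have "lam x b = lam x l \<otimes> (inv l \<otimes> b)" using lambda_mult_Fix[OF x _ f] l by (metis DiffD1)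
        then show ?thesis using xl b_eq by simp
      qed
    qed
  qed (use l in simp)
  moreover have "lambda_shift l x = \<one> \<longleftrightarrow> lam x l = l" if "x \<in> carrier G" for x
    using that l inv_solve_left'[of "\<one>" l "lam x l"] unfolding lambda_shift_def by simp
  ultimately show ?thesis
    unfolding kernel_def brace_ker_def using carrier_C by auto
qed

end

lemma Fact_ker_iso_Fix: "C Mod brace_ker G C \<cong> G\<lparr>carrier := Fix\<rparr>"
proof -
  obtain l where l: "l \<in> carrier G - Fix" using nonfixed_ne by blast
  show ?thesis
    using group_hom.FactGroup_iso[OF group_hom_lambda_shift[OF l]] lambda_shift_surj[OF l]
      kernel_lambda_shift[OF l] by simp
qed

lemma comm_group_Fact_ker: "comm_group (C Mod brace_ker G C)"
proof -
  obtain l where l: "l \<in> carrier G - Fix" using nonfixed_ne by blast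
  have "brace_ker G C \<lhd> C"
    using group_hom.normal_kernel[OF group_hom_lambda_shift[OF l]] kernel_lambda_shift[OF l] by simp
  then have "group (C Mod brace_ker G C)" by (rule normal.factorgroup_is_group)
  then show ?thesis
    using comm_group.iso_imp_comm_group[OF comm_group_Fix] group.iso_sym[OF _ Fact_ker_iso_Fix]
      group.is_monoid by blast
qed

end

theorem mainTheorem13:
  fixes G C :: "'a monoid"
  assumes "skew_brace G C"
    and "finite (carrier G)"
    and "card (Lambda_vertices G C) = 1"
  shows "comm_group (C Mod brace_ker G C)
       \<and> comm_group (G\<lparr>carrier := brace_Fix G C\<rparr>)
       \<and> (C Mod brace_ker G C) \<cong> (G\<lparr>carrier := brace_Fix G C\<rparr>)
       \<and> (\<forall>f\<in>brace_Fix G C. \<forall>x\<in>carrier G - brace_Fix G C.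
            (x \<otimes>\<^bsub>G\<^esub> f) \<otimes>\<^bsub>G\<^esub> inv\<^bsub>G\<^esub> x = inv\<^bsub>G\<^esub> f)"
proof -
  interpret skew_brace_struct G C using assms(1) skew_brace_iff_struct by blast
  interpret transitive_on_nonfixed G C
    by unfold_locales
      (use assms(2,3) single_vertex_imp_transitive single_vertex_imp_nonfixed_ne in auto)
  show ?thesis using comm_group_Fact_ker comm_group_Fix Fact_ker_iso_Fix conj_Fix_eq_inv by blast
qed

end
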